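(* Let $K$ be an algebraically closed field complete with respect to a non-archimedean absolute value $|\cdot|$, with valuation ring $\mathcal{O}$, maximal ideal $\mathfrak{m}$, residue field $k$, and let $\varphi\in K(z)$ have degree two with three distinct fixed points in $\mathbb{P}^1(K)$, with multipliers $\lambda_1,\lambda_2,\lambda_3$. Then the fixed points are not all repelling. Moreover: (A) if $\varphi$ has two repelling fixed points, the third is attracting; (B) if $\varphi$ has exactly one repelling fixed point, the other two are indifferent; (C) if $\varphi$ has no repelling fixed points, then either some pair $i\ne j$ satisfies $\tilde\lambda_i\tilde\lambda_j\ne\tilde1$, or $\tilde\lambda_1=\tilde\lambda_2=\tilde\lambda_3=\tilde1$.
   Context: A fixed point with multiplier $\lambda$ is attracting if $|\lambda|<1$, indifferent if $|\lambda|=1$, repelling if $|\lambda|>1$. For $x\in\mathcal{O}$, $\tilde x$ denotes its image in $k=\mathcal{O}/\mathfrak{m}$. *)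

theory Defs
  imports "HOL-Computational_Algebra.Polynomial_Factorial"
begin

definition nonarch_abs :: "('a::field \<Rightarrow> real) \<Rightarrow> bool" where
  "nonarch_abs v \<longleftrightarrow>
     (\<forall>x. 0 \<le> v x) \<and> (\<forall>x. v x = 0 \<longleftrightarrow> x = 0) \<and>
     (\<forall>x y. v (x * y) = v x * v y) \<and>
     (\<forall>x y. v (x + y) \<le> max (v x) (v y))"

definition abs_complete :: "('a::field \<Rightarrow> real) \<Rightarrow> bool" where
  "abs_complete v \<longleftrightarrow>
     (\<forall>s :: nat \<Rightarrow> 'a.
        (\<forall>e>0. \<exists>N. \<forall>m\<ge>N. \<forall>n\<ge>N. v (s m - s n) < e) \<longrightarrow>
        (\<exists>L. \<forall>e>0. \<exists>N. \<forall>n\<ge>N. v (s n - L) < e))"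

definition alg_closed_field :: "'a::field itself \<Rightarrow> bool" where
  "alg_closed_field _ \<longleftrightarrow> (\<forall>p :: 'a poly. 1 \<le> degree p \<longrightarrow> (\<exists>x. poly p x = 0))"

text \<open>Points of P^1(K): Some z is the affine point z, None is infinity.
  A rational map is given by a pair (P,Q) of coprime polynomials, phi = P/Q;
  its degree is max (degree P) (degree Q).\<close>

definition rat_deg :: "'a::field poly \<Rightarrow> 'a poly \<Rightarrow> nat" where
  "rat_deg P Q = max (degree P) (degree Q)"

definition rat_app :: "'a::field poly \<Rightarrow> 'a poly \<Rightarrow> 'a option \<Rightarrow> 'a option" where
  "rat_app P Q x = (case x of
      Some z \<Rightarrow> (if poly Q z = 0 then None else Some (poly P z / poly Q z))
    | None \<Rightarrow> (if degree Q < degree P then None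
               else if degree P = degree Q then Some (lead_coeff P / lead_coeff Q)
               else Some 0))"

definition is_fixed_pt :: "'a::field poly \<Rightarrow> 'a poly \<Rightarrow> 'a option \<Rightarrow> bool" where
  "is_fixed_pt P Q x \<longleftrightarrow> rat_app P Q x = x"

text \<open>x^d p(1/x), for degree p \<le> d.\<close>
definition recip_poly :: "nat \<Rightarrow> 'a::field poly \<Rightarrow> 'a poly" where
  "recip_poly d p = (\<Sum>i\<le>d. monom (coeff p i) (d - i))"

text \<open>Multiplier phi'(z) at a finite fixed point; at infinity the multiplier
  is psi'(0) for the conjugate psi(w) = 1/phi(1/w) = recip Q / recip P.
  Derivatives are formal (= analytic) derivatives of rational functions.\<close>
definition multiplier :: "'a::field poly \<Rightarrow> 'a poly \<Rightarrow> 'a option \<Rightarrow> 'a" where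
  "multiplier P Q x = (case x of
      Some z \<Rightarrow> (poly (pderiv P) z * poly Q z - poly P z * poly (pderiv Q) z) / (poly Q z)^2
    | None \<Rightarrow> (let d = rat_deg P Q; A = recip_poly d P; B = recip_poly d Q in
               (poly (pderiv B) 0 * poly A 0 - poly B 0 * poly (pderiv A) 0) / (poly A 0)^2))"

text \<open>For x, y in the valuation ring O = {x. v x \<le> 1}: their images in the
  residue field k = O/m coincide iff x - y lies in m = {x. v x < 1}.\<close>
definition residue_eq :: "('a::field \<Rightarrow> real) \<Rightarrow> 'a \<Rightarrow> 'a \<Rightarrow> bool" where
  "residue_eq v x y \<longleftrightarrow> v (x - y) < 1"

end

theory Submission
  imports Defs
begin

text \<open>For three distinct fixed points of a quadratic rational map the multipliers satisfy
  \<open>\<lambda>\<^sub>1\<lambda>\<^sub>2\<lambda>\<^sub>3 = \<lambda>\<^sub>1 + \<lambda>\<^sub>2 + \<lambda>\<^sub>3 - 2\<close>, the holomorphic fixed point index formula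
  \<open>\<Sum> 1/(1 - \<lambda>\<^sub>i) = 1\<close> cleared of denominators; for finite fixed points it reduces to
  Lagrange interpolation of the denominator at the three points. The rest is ultrametric
  bookkeeping: writing the relation as \<open>\<lambda>\<^sub>3(\<lambda>\<^sub>1\<lambda>\<^sub>2 - 1) = \<lambda>\<^sub>1 + \<lambda>\<^sub>2 - 2\<close>, two repelling
  multipliers make the left factor dominate, forcing \<open>\<lambda>\<^sub>3\<close> to be attracting, and one repelling
  multiplier dominates the right side, forcing the others to be indifferent. If all pairwise
  products reduce to 1, then in the residue field \<open>\<lambda>\<^sub>1 = \<lambda>\<^sub>2 = \<lambda>\<^sub>3\<close>, \<open>\<lambda>\<^sub>1\<^sup>2 = 1\<close> and
  \<open>2\<lambda>\<^sub>1 = 2\<close>, hence \<open>(\<lambda>\<^sub>1 - 1)\<^sup>2 = 0\<close> in every characteristic.\<close>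

lemma poly_cubic_expansion:
  fixes p :: "'a::idom poly"
  assumes "degree p \<le> 3"
  shows "poly p z = coeff p 0 + coeff p 1 * z + coeff p 2 * z^2 + coeff p 3 * z^3"
    and "poly (pderiv p) z = coeff p 1 + 2 * coeff p 2 * z + 3 * coeff p 3 * z^2"
proof -
  have p: "p = [:coeff p 0, coeff p 1, coeff p 2, coeff p 3:]"
    using assms by (auto simp: poly_eq_iff coeff_pCons coeff_eq_0 numeral_3_eq_3 numeral_2_eq_2
        split: nat.split)
  show "poly p z = coeff p 0 + coeff p 1 * z + coeff p 2 * z^2 + coeff p 3 * z^3"
    by (subst p) (simp add: algebra_simps power2_eq_square power3_eq_cube)
  show "poly (pderiv p) z = coeff p 1 + 2 * coeff p 2 * z + 3 * coeff p 3 * z^2"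
    by (subst p) (simp add: pderiv_pCons algebra_simps power2_eq_square)
qed

lemma poly_pderiv_at_root_of_cubic:
  fixes F :: "'a::field poly"
  assumes "degree F \<le> 3" and "poly F a = 0" "poly F b = 0" "poly F c = 0"
    and "a \<noteq> b" "a \<noteq> c" "b \<noteq> c"
  shows "poly (pderiv F) a = coeff F 3 * (a - b) * (a - c)"
proof -
  define f0 f1 f2 f3 where "f0 = coeff F 0" "f1 = coeff F 1" "f2 = coeff F 2" "f3 = coeff F 3"
  have root: "f0 + f1 * x + f2 * x^2 + f3 * x^3 = 0" if "poly F x = 0" for x
    using that poly_cubic_expansion(1)[OF assms(1)] unfolding f0_f1_f2_f3_def by simp
  have "(a - b) * (f1 + f2 * (a + b) + f3 * (a^2 + a*b + b^2)) = 0"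
    using root[OF assms(2)] root[OF assms(3)] by algebra
  then have ab: "f1 + f2 * (a + b) + f3 * (a^2 + a*b + b^2) = 0" using assms(5) by simp
  have "(a - c) * (f1 + f2 * (a + c) + f3 * (a^2 + a*c + c^2)) = 0"
    using root[OF assms(2)] root[OF assms(4)] by algebra
  then have ac: "f1 + f2 * (a + c) + f3 * (a^2 + a*c + c^2) = 0" using assms(6) by simp
  have "(b - c) * (f2 + f3 * (a + b + c)) = 0" using ab ac by algebra
  then have "f2 + f3 * (a + b + c) = 0" using assms(7) by simp
  then show ?thesis
    using ab poly_cubic_expansion(2)[OF assms(1), where z=a] unfolding f0_f1_f2_f3_def by algebra
qed

lemma poly_pderiv_at_root_of_quadratic:
  fixes F :: "'a::field poly"
  assumes "degree F \<le> 2" and "poly F a = 0" "poly F b = 0" and "a \<noteq> b"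
  shows "poly (pderiv F) a = coeff F 2 * (a - b)"
proof -
  have F3: "coeff F 3 = 0" using assms(1) by (simp add: coeff_eq_0)
  have "degree F \<le> 3" using assms(1) by simp
  note F = poly_cubic_expansion[OF this, unfolded F3]
  have "(a - b) * (coeff F 1 + coeff F 2 * (a + b)) = 0"
    using assms(2,3) F(1)[of a] F(1)[of b] by algebra
  then have "coeff F 1 + coeff F 2 * (a + b) = 0" using assms(4) by simp
  then show ?thesis using F(2)[of a] by algebra
qed

lemma quadratic_interpolation:
  fixes Q :: "'a::idom poly"
  assumes "degree Q \<le> 2"
  shows "(b - c) * poly Q a + (c - a) * poly Q b + (a - b) * poly Q c
           = - coeff Q 2 * (a - b) * (b - c) * (c - a)"
proof -
  have "degree Q \<le> 3" "coeff Q 3 = 0" using assms by (auto simp: coeff_eq_0)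
  then show ?thesis using poly_cubic_expansion(1)[of Q] by (simp add: algebra_simps power2_eq_square)
qed

definition fixed_point_poly :: "'a::field poly \<Rightarrow> 'a poly \<Rightarrow> 'a poly" where
  "fixed_point_poly P Q = P - pCons 0 Q"

lemma poly_fixed_point_poly: "poly (fixed_point_poly P Q) z = poly P z - z * poly Q z"
  by (simp add: fixed_point_poly_def)

lemma poly_pderiv_fixed_point_poly:
  "poly (pderiv (fixed_point_poly P Q)) z = poly (pderiv P) z - poly Q z - z * poly (pderiv Q) z"
  by (simp add: fixed_point_poly_def pderiv_diff pderiv_pCons)

lemma is_fixed_pt_Some_iff:
  "is_fixed_pt P Q (Some a) \<longleftrightarrow> poly Q a \<noteq> 0 \<and> poly (fixed_point_poly P Q) a = 0"
  by (auto simp: is_fixed_pt_def rat_app_def poly_fixed_point_poly field_simps)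

lemma is_fixed_pt_None_iff: "is_fixed_pt P Q None \<longleftrightarrow> degree Q < degree P"
  by (simp add: is_fixed_pt_def rat_app_def)

lemma multiplier_Some_fixed_point:
  assumes "is_fixed_pt P Q (Some a)"
  shows "multiplier P Q (Some a) = 1 + poly (pderiv (fixed_point_poly P Q)) a / poly Q a"
proof -
  have Qa: "poly Q a \<noteq> 0" and Pa: "poly P a = a * poly Q a"
    using assms by (auto simp: is_fixed_pt_Some_iff poly_fixed_point_poly)
  have "multiplier P Q (Some a)
      = poly Q a * (poly (pderiv P) a - a * poly (pderiv Q) a) / (poly Q a * poly Q a)"
    by (simp add: multiplier_def Pa power2_eq_square algebra_simps)
  also have "\<dots> = 1 + poly (pderiv (fixed_point_poly P Q)) a / poly Q a"
    using Qa by (simp add: poly_pderiv_fixed_point_poly field_simps)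
  finally show ?thesis .
qed

lemma multiplier_None_degree_2:
  assumes "rat_deg P Q = 2" and "is_fixed_pt P Q None"
  shows "multiplier P Q None = coeff Q 1 / coeff P 2"
proof -
  have dP: "degree P = 2" and dQ: "degree Q \<le> 1"
    using assms by (auto simp: rat_deg_def is_fixed_pt_None_iff)
  have "recip_poly 2 P = [:coeff P 2, coeff P 1, coeff P 0:]"
       "recip_poly 2 Q = [:0, coeff Q 1, coeff Q 0:]"
    using dP dQ by (auto simp: recip_poly_def numeral_2_eq_2 atMost_Suc poly_eq_iff
        coeff_pCons coeff_eq_0 split: nat.split)
  moreover have "coeff P 2 \<noteq> 0" using dP leading_coeff_0_iff[of P] by force
  ultimately show ?thesis
    by (simp add: multiplier_def Let_def assms(1) pderiv_pCons power2_eq_square)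
qed

definition multiplier_relation :: "'a::field \<Rightarrow> 'a \<Rightarrow> 'a \<Rightarrow> bool" where
  "multiplier_relation x y z \<longleftrightarrow> x * y * z = x + y + z - 2"

lemma multiplier_relation_commute:
  "multiplier_relation x y z \<Longrightarrow> multiplier_relation y x z"
  "multiplier_relation x y z \<Longrightarrow> multiplier_relation x z y"
  by (simp_all add: multiplier_relation_def algebra_simps)

text \<open>With \<open>\<lambda>\<^sub>i = 1 - X\<^sub>i/A\<^sub>i\<close>, the hypothesis is the index formula \<open>\<Sum> A\<^sub>i/X\<^sub>i = 1\<close>
  multiplied by \<open>X\<^sub>1X\<^sub>2X\<^sub>3\<close>.\<close>

lemma multiplier_relation_fractions:
  fixes A B C X Y Z :: "'a::field"
  assumes "A \<noteq> 0" "B \<noteq> 0" "C \<noteq> 0" and "X * Y * Z = X * Y * C + X * Z * B + Y * Z * A"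
  shows "multiplier_relation (1 - X / A) (1 - Y / B) (1 - Z / C)"
proof -
  have "(1 - x) * (1 - y) * (1 - z) = (1 - x) + (1 - y) + (1 - z) - 2
      \<longleftrightarrow> x * y * z = x * y + x * z + y * z" for x y z :: 'a
    by (auto simp: algebra_simps)
  with assms show ?thesis unfolding multiplier_relation_def by (simp add: field_simps)
qed

lemma multiplier_relation_finite_fixed_points:
  assumes "rat_deg P Q = 2"
    and "is_fixed_pt P Q (Some a)" "is_fixed_pt P Q (Some b)" "is_fixed_pt P Q (Some c)"
    and "a \<noteq> b" "a \<noteq> c" "b \<noteq> c"
  shows "multiplier_relation (multiplier P Q (Some a)) (multiplier P Q (Some b))
           (multiplier P Q (Some c))"
proof -
  define F k where "F = fixed_point_poly P Q" and "k = coeff Q 2"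
  have dP: "degree P \<le> 2" and dQ: "degree Q \<le> 2" using assms(1) by (auto simp: rat_deg_def)
  then have "degree F \<le> 3"
    unfolding F_def fixed_point_poly_def
    by (intro degree_diff_le) (auto intro: order.trans[OF degree_pCons_le])
  moreover have "coeff F 3 = - k"
    using dP by (simp add: F_def k_def fixed_point_poly_def eval_nat_numeral coeff_eq_0)
  ultimately have mult: "multiplier P Q (Some x) = 1 - k * (x - y) * (x - w) / poly Q x"
    if "is_fixed_pt P Q (Some x)" "is_fixed_pt P Q (Some y)" "is_fixed_pt P Q (Some w)"
      "x \<noteq> y" "x \<noteq> w" "y \<noteq> w" for x y w
    using that poly_pderiv_at_root_of_cubic[of F x y w]
    by (simp add: multiplier_Some_fixed_point is_fixed_pt_Some_iff F_def)
  have "(b - c) * poly Q a + (c - a) * poly Q b + (a - b) * poly Q c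
      = - k * (a - b) * (b - c) * (c - a)"
    unfolding k_def by (rule quadratic_interpolation[OF dQ])
  then have index_sum: "k * (a - b) * (a - c) * (k * (b - a) * (b - c)) * (k * (c - a) * (c - b))
    = k * (a - b) * (a - c) * (k * (b - a) * (b - c)) * poly Q c
      + k * (a - b) * (a - c) * (k * (c - a) * (c - b)) * poly Q b
      + k * (b - a) * (b - c) * (k * (c - a) * (c - b)) * poly Q a"
    by algebra
  have "poly Q a \<noteq> 0" "poly Q b \<noteq> 0" "poly Q c \<noteq> 0"
    using assms(2-4) by (simp_all add: is_fixed_pt_Some_iff)
  note relation = multiplier_relation_fractions[OF this index_sum]
  have "multiplier P Q (Some a) = 1 - k * (a - b) * (a - c) / poly Q a"
    and "multiplier P Q (Some b) = 1 - k * (b - a) * (b - c) / poly Q b"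
    and "multiplier P Q (Some c) = 1 - k * (c - a) * (c - b) / poly Q c"
    using assms(2-7) by (auto intro!: mult)
  with relation show ?thesis by simp
qed

lemma multiplier_relation_fixed_point_infinity:
  assumes "rat_deg P Q = 2"
    and "is_fixed_pt P Q (Some a)" "is_fixed_pt P Q (Some b)" "is_fixed_pt P Q None"
    and "a \<noteq> b"
  shows "multiplier_relation (multiplier P Q (Some a)) (multiplier P Q (Some b))
           (multiplier P Q None)"
proof -
  define F k where "F = fixed_point_poly P Q" and "k = coeff Q 1 - coeff P 2"
  have dP: "degree P = 2" and dQ: "degree Q \<le> 1"
    using assms(1,4) by (auto simp: rat_deg_def is_fixed_pt_None_iff)
  then have "degree F \<le> 2"
    unfolding F_def fixed_point_poly_def
    by (intro degree_diff_le) (auto intro: order.trans[OF degree_pCons_le])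
  moreover have "coeff F 2 = - k"
    by (simp add: F_def k_def fixed_point_poly_def eval_nat_numeral)
  ultimately have mult: "multiplier P Q (Some x) = 1 - k * (x - y) / poly Q x"
    if "is_fixed_pt P Q (Some x)" "is_fixed_pt P Q (Some y)" "x \<noteq> y" for x y
    using that poly_pderiv_at_root_of_quadratic[of F x y]
    by (simp add: multiplier_Some_fixed_point is_fixed_pt_Some_iff F_def)
  have p2: "coeff P 2 \<noteq> 0" using dP leading_coeff_0_iff[of P] by force
  then have mult_inf: "multiplier P Q None = 1 - (- k) / coeff P 2"
    using multiplier_None_degree_2[OF assms(1,4)] by (simp add: k_def field_simps)
  have "poly Q b - poly Q a = coeff Q 1 * (b - a)"
    using dQ poly_cubic_expansion(1)[of Q] by (simp add: coeff_eq_0 algebra_simps)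
  then have index_sum: "k * (a - b) * (k * (b - a)) * - k
    = k * (a - b) * (k * (b - a)) * coeff P 2 + k * (a - b) * - k * poly Q b
      + k * (b - a) * - k * poly Q a"
    unfolding k_def by algebra
  have "poly Q a \<noteq> 0" "poly Q b \<noteq> 0"
    using assms(2,3) by (simp_all add: is_fixed_pt_Some_iff)
  note relation = multiplier_relation_fractions[OF this p2 index_sum]
  have "multiplier P Q (Some a) = 1 - k * (a - b) / poly Q a"
    and "multiplier P Q (Some b) = 1 - k * (b - a) / poly Q b"
    using assms(2,3,5) by (auto intro!: mult)
  with relation mult_inf show ?thesis by simp
qed

lemma multiplier_relation_fixed_points:
  assumes "rat_deg P Q = 2"
    and "is_fixed_pt P Q x" "is_fixed_pt P Q y" "is_fixed_pt P Q w"
    and "x \<noteq> y" "x \<noteq> w" "y \<noteq> w"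
  shows "multiplier_relation (multiplier P Q x) (multiplier P Q y) (multiplier P Q w)"
  using assms
  by (cases x; cases y; cases w)
     (auto intro: multiplier_relation_finite_fixed_points multiplier_relation_fixed_point_infinity
        multiplier_relation_commute[OF multiplier_relation_fixed_point_infinity]
        multiplier_relation_commute(1)[OF
          multiplier_relation_commute(2)[OF multiplier_relation_fixed_point_infinity]])

locale nonarch_absolute_value =
  fixes v :: "'a::field \<Rightarrow> real"
  assumes nonarch_abs: "nonarch_abs v"
begin

lemma nonneg: "0 \<le> v x"
  and eq_0_iff: "v x = 0 \<longleftrightarrow> x = 0"
  and mult: "v (x * y) = v x * v y"
  and add_le: "v (x + y) \<le> max (v x) (v y)"
  using nonarch_abs by (auto simp: nonarch_abs_def)

lemma zero [simp]: "v 0 = 0"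
  by (simp add: eq_0_iff)

lemma one [simp]: "v 1 = 1"
  using mult[of 1 1] eq_0_iff[of 1] by simp

lemma minus [simp]: "v (- x) = v x"
proof -
  have "v (- 1) * v (- 1) = 1" using mult[of "- 1" "- 1"] by simp
  then have "v (- 1) = 1"
    using nonneg[of "- 1"] by (metis abs_of_nonneg abs_square_eq_1 power2_eq_square)
  then show ?thesis using mult[of "- 1" x] by simp
qed

lemma diff_le: "v (x - y) \<le> max (v x) (v y)"
  using add_le[of x "- y"] by simp

lemma of_nat_le_one: "v (of_nat n) \<le> 1"
  by (induction n) (auto intro: order.trans[OF add_le])

lemma add_eq_of_less: "v x < v y \<Longrightarrow> v (x + y) = v y"
  using add_le[of x y] diff_le[of "x + y" x] by auto

lemma add_less_one: "v x < 1 \<Longrightarrow> v y < 1 \<Longrightarrow> v (x + y) < 1"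
  using add_le[of x y] by simp

lemma mult_less_one: "v x \<le> 1 \<Longrightarrow> v y < 1 \<Longrightarrow> v (x * y) < 1"
  using nonneg[of x] nonneg[of y] mult_left_le_one_le[of "v y" "v x"] by (simp add: mult)

lemma mult_le_one: "v x \<le> 1 \<Longrightarrow> v y \<le> 1 \<Longrightarrow> v (x * y) \<le> 1"
  using nonneg[of y] Rings.mult_le_one[of "v x" "v y"] by (simp add: mult)

lemma diff_le_one: "v x \<le> 1 \<Longrightarrow> v y \<le> 1 \<Longrightarrow> v (x - y) \<le> 1"
  using diff_le[of x y] by simp

lemma two_le_one: "v 2 \<le> 1"
  using of_nat_le_one[of 2] by simp

lemma two_repelling_imp_attracting:
  assumes "multiplier_relation a b c" and "1 < v a" "1 < v b"
  shows "v c < 1"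
proof -
  have eq: "c * (a * b - 1) = (a + b) - 2"
    using assms(1) by (simp add: multiplier_relation_def algebra_simps)
  have grow: "v a < v a * v b" "v b < v a * v b" "1 < v a * v b"
    using assms(2,3) by (simp_all add: less_1_mult)
  have vab: "v (a * b - 1) = v a * v b"
    using add_eq_of_less[of "- 1" "a * b"] grow(3) by (simp add: mult)
  have "v c * (v a * v b) = v ((a + b) - 2)" by (metis eq vab mult)
  also have "\<dots> \<le> max (max (v a) (v b)) 1"
    using diff_le[of "a + b" 2] add_le[of a b] two_le_one by linarith
  also have "\<dots> < v a * v b" using grow by simp
  finally show ?thesis using grow(3) by (simp add: mult_less_cancel_right2)
qed

lemma one_repelling_imp_indifferent:
  assumes "multiplier_relation a b c" and "1 < v a" "v b \<le> 1" "v c \<le> 1"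
  shows "v b = 1"
proof (rule ccontr)
  assume "v b \<noteq> 1"
  with assms(3) have "v b < 1" by simp
  have eq: "c * (a * b - 1) = (b - 2) + a"
    using assms(1) by (simp add: multiplier_relation_def algebra_simps)
  have "v a * v b < v a" using assms(2) \<open>v b < 1\<close> by (simp add: mult_less_cancel_left2)
  then have "v (a * b - 1) < v a"
    using diff_le[of "a * b" 1] assms(2) by (smt (verit) mult one)
  then have "v (c * (a * b - 1)) < v a"
    using assms(4) nonneg[of c] nonneg[of "a * b - 1"] mult_left_le_one_le[of "v (a * b - 1)" "v c"]
    by (simp add: mult)
  moreover have "v (b - 2) \<le> 1" using diff_le[of b 2] two_le_one assms(3) by linarith
  then have "v ((b - 2) + a) = v a" using assms(2) by (simp add: add_eq_of_less)
  ultimately show False using eq by simp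
qed

lemma residue_eq_one_if_products:
  assumes "multiplier_relation a b c" and "v a \<le> 1" "v b \<le> 1" "v c \<le> 1"
    and "residue_eq v (a * b) 1" "residue_eq v (a * c) 1" "residue_eq v (b * c) 1"
  shows "residue_eq v a 1"
proof -
  \<comment> \<open>an ideal-membership certificate for \<open>(a - 1)\<^sup>2\<close>; it avoids dividing by 2\<close>
  have "(a - 1)^2 = (1 - c) * (a * b - 1) + (b * (a - 1)) * (a * c - 1) + (a * (1 - a)) * (b * c - 1)"
    using assms(1) unfolding multiplier_relation_def by algebra
  moreover have "v (1 - c) \<le> 1" "v (b * (a - 1)) \<le> 1" "v (a * (1 - a)) \<le> 1"
    using assms(2-4) by (auto intro!: mult_le_one diff_le_one)
  ultimately have "v ((a - 1)^2) < 1"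
    using assms(5-7) unfolding residue_eq_def by (metis add_less_one mult_less_one)
  then have "(v (a - 1))^2 < 1" by (simp add: power2_eq_square mult)
  then show ?thesis using nonneg[of "a - 1"] by (simp add: residue_eq_def abs_square_less_1)
qed

end

theorem lemma3p3:
  fixes v :: "'a::field \<Rightarrow> real"
    and P Q :: "'a poly"
    and fp :: "nat \<Rightarrow> 'a option"
  assumes "nonarch_abs v"
    and "abs_complete v"
    and "alg_closed_field TYPE('a)"
    and "coprime P Q"
    and "rat_deg P Q = 2"
    and "inj_on fp {0, 1, 2}"
    and "\<forall>i\<in>{0, 1, 2}. is_fixed_pt P Q (fp i)"
  defines "lam \<equiv> (\<lambda>i. multiplier P Q (fp i))"
  shows "\<not> (\<forall>i\<in>{0, 1, 2}. 1 < v (lam i))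
    \<and> (\<forall>i\<in>{0, 1, 2}. \<forall>j\<in>{0, 1, 2}. \<forall>k\<in>{0, 1, 2}.
           i \<noteq> j \<and> j \<noteq> k \<and> i \<noteq> k \<and> 1 < v (lam i) \<and> 1 < v (lam j)
           \<longrightarrow> v (lam k) < 1)
    \<and> (\<forall>i\<in>{0, 1, 2}. \<forall>j\<in>{0, 1, 2}. \<forall>k\<in>{0, 1, 2}.
           i \<noteq> j \<and> j \<noteq> k \<and> i \<noteq> k \<and> 1 < v (lam i) \<and> \<not> 1 < v (lam j) \<and> \<not> 1 < v (lam k)
           \<longrightarrow> v (lam j) = 1 \<and> v (lam k) = 1)
    \<and> ((\<forall>i\<in>{0, 1, 2}. \<not> 1 < v (lam i)) \<longrightarrow>
           (\<exists>i\<in>{0, 1, 2}. \<exists>j\<in>{0, 1, 2}. i \<noteq> j \<and> \<not> residue_eq v (lam i * lam j) 1)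
           \<or> (\<forall>i\<in>{0, 1, 2}. residue_eq v (lam i) 1))"
proof -
  interpret nonarch_absolute_value v by unfold_locales (fact assms(1))
  have rel: "multiplier_relation (lam i) (lam j) (lam k)"
    if "i \<in> {0, 1, 2}" "j \<in> {0, 1, 2}" "k \<in> {0, 1, 2}" "i \<noteq> j" "j \<noteq> k" "i \<noteq> k" for i j k
    unfolding lam_def using that assms(7)
    by (intro multiplier_relation_fixed_points[OF assms(5)] inj_on_contraD[OF assms(6)]) auto
  have "\<not> (\<forall>i\<in>{0, 1, 2}. 1 < v (lam i))"
  proof
    assume "\<forall>i\<in>{0, 1, 2}. 1 < v (lam i)"
    with two_repelling_imp_attracting[OF rel[of 0 1 2]] show False by simp
  qed
  moreover have "\<forall>i\<in>{0, 1, 2}. \<forall>j\<in>{0, 1, 2}. \<forall>k\<in>{0, 1, 2}.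
      i \<noteq> j \<and> j \<noteq> k \<and> i \<noteq> k \<and> 1 < v (lam i) \<and> 1 < v (lam j) \<longrightarrow> v (lam k) < 1"
    using two_repelling_imp_attracting[OF rel] by blast
  moreover have "\<forall>i\<in>{0, 1, 2}. \<forall>j\<in>{0, 1, 2}. \<forall>k\<in>{0, 1, 2}.
      i \<noteq> j \<and> j \<noteq> k \<and> i \<noteq> k \<and> 1 < v (lam i) \<and> \<not> 1 < v (lam j) \<and> \<not> 1 < v (lam k)
      \<longrightarrow> v (lam j) = 1 \<and> v (lam k) = 1"
    using one_repelling_imp_indifferent[OF rel]
      one_repelling_imp_indifferent[OF multiplier_relation_commute(2)[OF rel]]
    by (simp add: not_less)
  moreover have "(\<forall>i\<in>{0, 1, 2}. \<not> 1 < v (lam i)) \<longrightarrow>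
      (\<exists>i\<in>{0, 1, 2}. \<exists>j\<in>{0, 1, 2}. i \<noteq> j \<and> \<not> residue_eq v (lam i * lam j) 1)
      \<or> (\<forall>i\<in>{0, 1, 2}. residue_eq v (lam i) 1)"
  proof (intro impI, subst disj_commute, rule disjCI)
    assume "\<forall>i\<in>{0, 1, 2}. \<not> 1 < v (lam i)"
      and "\<not> (\<exists>i\<in>{0, 1, 2}. \<exists>j\<in>{0, 1, 2}. i \<noteq> j \<and> \<not> residue_eq v (lam i * lam j) 1)"
    then show "\<forall>i\<in>{0, 1, 2}. residue_eq v (lam i) 1"
      using residue_eq_one_if_products[OF rel[of 0 1 2]] residue_eq_one_if_products[OF rel[of 1 0 2]]
        residue_eq_one_if_products[OF rel[of 2 0 1]]
      by (simp add: not_less)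
  qed
  ultimately show ?thesis by blast
qed

end
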